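(* Let $\mathcal{B}=(v_1,\dots,v_N)$ with $v_1,\dots,v_N$ independent and uniform in $\mathbb{F}_2^n$, let $C^k\in\mathbb{F}_2^N$ be the $k$-th column ($C^k_j=(v_j)_k$), define $k\sim_{\mathcal B}j$ iff $C^k=C^j$ or $C^k=1-C^j$, and let $|I|$ be the number of equivalence classes of $\sim_{\mathcal B}$ on $\{1,\dots,n\}$. Then for $i=1,\dots,n$, $${n\brace i}\frac{1}{2^{(N-1)(n-i)}}\prod_{j=1}^i\left(1-\frac{j-1}{2^{N-1}}\right)\le\mathbb{P}(|I|=i)\le{n\brace i}\frac{i^{n-i}}{2^{(N-1)(n-i)}}\prod_{j=1}^i\left(1-\frac{j-1}{2^{N-1}}\right),$$ where ${n\brace i}$ is the Stirling number of the second kind. *)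

theory Defs
  imports "HOL-Probability.Probability" "HOL-Combinatorics.Stirling"
begin

text \<open>Vectors of F_2^n, coordinates indexed by 1..n, entries in bool (True = 1);
  coordinates outside 1..n are fixed to False.\<close>
definition F2vecs :: "nat \<Rightarrow> (nat \<Rightarrow> bool) set" where
  "F2vecs n = {v. \<forall>k. k \<notin> {1..n} \<longrightarrow> v k = False}"

definition rand_family :: "nat \<Rightarrow> nat \<Rightarrow> (nat \<Rightarrow> nat \<Rightarrow> bool) pmf" where
  "rand_family N n = Pi_pmf {1..N} (\<lambda>_. False) (\<lambda>_. pmf_of_set (F2vecs n))"

definition col :: "nat \<Rightarrow> (nat \<Rightarrow> nat \<Rightarrow> bool) \<Rightarrow> nat \<Rightarrow> nat \<Rightarrow> bool" where
  "col N B k = (\<lambda>j. if j \<in> {1..N} then B j k else False)"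

definition simB :: "nat \<Rightarrow> (nat \<Rightarrow> nat \<Rightarrow> bool) \<Rightarrow> nat \<Rightarrow> nat \<Rightarrow> bool" where
  "simB N B k j \<longleftrightarrow> col N B k = col N B j \<or> (\<forall>l\<in>{1..N}. col N B k l = (\<not> col N B j l))"

definition simB_rel :: "nat \<Rightarrow> nat \<Rightarrow> (nat \<Rightarrow> nat \<Rightarrow> bool) \<Rightarrow> (nat \<times> nat) set" where
  "simB_rel N n B = {(k, j). k \<in> {1..n} \<and> j \<in> {1..n} \<and> simB N B k j}"

definition num_classes :: "nat \<Rightarrow> nat \<Rightarrow> (nat \<Rightarrow> nat \<Rightarrow> bool) \<Rightarrow> nat" where
  "num_classes N n B = card ({1..n} // simB_rel N n B)"

end

theory Submission
  imports Defs
begin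

(* Transposing B, its columns form a uniform random map C from {1..n} to F_2^N, and k ~ j
   holds iff C k and C j have the same image under the 2-to-1 map sending c to the element of
   {c, 1 - c} with first coordinate 0. So |I| is the image size of a uniform map {1..n} -> F_2^N
   followed by a 2-to-1 projection onto a set of size M = 2^(N-1). Lifting through the
   projection multiplies counts by 2^n, and maps from an n-set to an M-set with image of size i
   number S(n,i) M(M-1)...(M-i+1); hence P(|I| = i) = S(n,i) M(M-1)...(M-i+1) / M^n, which is
   the lower bound, and the upper bound follows from i^(n-i) >= 1. *)

lemma card_filter_card_insert:
  assumes "finite X" and "Y \<subseteq> X"
  shows "card {y \<in> X. card (insert y Y) = i}
    = (if card Y = i then i else 0) + (if Suc (card Y) = i then card X - card Y else 0)"
proof -
  have "finite Y" using assms finite_subset by blast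
  then have "{y \<in> X. card (insert y Y) = i}
      = (if card Y = i then Y else {}) \<union> (if Suc (card Y) = i then X - Y else {})"
    using assms(2) by (auto simp: card_insert_if)
  then show ?thesis
    using assms \<open>finite Y\<close> by (simp add: card_Un_disjoint card_Diff_subset)
qed

lemma card_PiE_insert_filter:
  assumes "a \<notin> A" and "finite A" and "finite X"
  shows "card {f \<in> insert a A \<rightarrow>\<^sub>E X. P (f ` insert a A)}
    = (\<Sum>g\<in>A \<rightarrow>\<^sub>E X. card {y \<in> X. P (insert y (g ` A))})"
proof -
  let ?G = "A \<rightarrow>\<^sub>E X"
  let ?upd = "\<lambda>(y, g). g(a := y)"
  have upd_image: "g(a := y) ` insert a A = insert y (g ` A)" for g :: "'a \<Rightarrow> 'b" and y
    using assms(1) by auto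
  have "{f \<in> insert a A \<rightarrow>\<^sub>E X. P (f ` insert a A)}
      = ?upd ` {x \<in> X \<times> ?G. P (?upd x ` insert a A)}"
    unfolding PiE_insert_eq by blast
  also have "{x \<in> X \<times> ?G. P (?upd x ` insert a A)} = {(y, g) \<in> X \<times> ?G. P (insert y (g ` A))}"
    by (auto simp: upd_image simp del: fun_upd_apply image_insert)
  finally have "{f \<in> insert a A \<rightarrow>\<^sub>E X. P (f ` insert a A)}
      = ?upd ` {(y, g) \<in> X \<times> ?G. P (insert y (g ` A))}" .
  moreover have "inj_on ?upd {(y, g) \<in> X \<times> ?G. P (insert y (g ` A))}"
    by (rule inj_on_subset[OF inj_combinator[OF assms(1)]]) auto
  moreover have "{(y, g) \<in> X \<times> ?G. P (insert y (g ` A))}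
      = prod.swap ` (SIGMA g:?G. {y \<in> X. P (insert y (g ` A))})"
    by auto
  ultimately show ?thesis
    using assms(2,3) by (simp add: card_image finite_PiE)
qed

lemma card_PiE_card_image_eq:
  assumes "finite A" and "finite X"
  shows "card {f \<in> A \<rightarrow>\<^sub>E X. card (f ` A) = i} = Stirling (card A) i * (\<Prod>j<i. card X - j)"
  using assms(1)
proof (induction A arbitrary: i rule: finite_induct)
  case empty
  then show ?case by (cases i) auto
next
  case (insert a A)
  let ?count = "\<lambda>k. card {g \<in> A \<rightarrow>\<^sub>E X. card (g ` A) = k}"
  have indicator_sum: "(\<Sum>g\<in>A \<rightarrow>\<^sub>E X. if card (g ` A) = k then c else 0) = c * ?count k" for k c
    using insert.hyps(1) assms(2) by (simp add: sum.inter_filter[symmetric] finite_PiE)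
  have "card {f \<in> insert a A \<rightarrow>\<^sub>E X. card (f ` insert a A) = i}
      = (\<Sum>g\<in>A \<rightarrow>\<^sub>E X. card {y \<in> X. card (insert y (g ` A)) = i})"
    using insert.hyps assms(2) by (intro card_PiE_insert_filter[where P = "\<lambda>S. card S = i"])
  also have "\<dots> = (\<Sum>g\<in>A \<rightarrow>\<^sub>E X. (if card (g ` A) = i then i else 0)
      + (if Suc (card (g ` A)) = i then card X - (i - 1) else 0))"
    by (intro sum.cong refl, subst card_filter_card_insert) (use assms(2) in \<open>auto simp: PiE_iff\<close>)
  finally have step: "card {f \<in> insert a A \<rightarrow>\<^sub>E X. card (f ` insert a A) = i}
      = i * ?count i + (if i = 0 then 0 else (card X - (i - 1)) * ?count (i - 1))"
    by (cases i) (simp_all add: sum.distrib indicator_sum)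
  show ?case
  proof (cases i)
    case 0
    then show ?thesis using step insert.hyps by simp
  next
    case (Suc k)
    then show ?thesis using step insert.hyps by (simp add: insert.IH algebra_simps)
  qed
qed

lemma card_PiE_lift_uniform_fibres:
  assumes "finite A" and "finite V" and "finite X" and "F \<subseteq> A \<rightarrow>\<^sub>E X"
    and fibres: "\<And>x. x \<in> X \<Longrightarrow> card {v \<in> V. p v = x} = d"
  shows "card {C \<in> A \<rightarrow>\<^sub>E V. (\<lambda>a\<in>A. p (C a)) \<in> F} = d ^ card A * card F"
proof -
  let ?lifts = "\<lambda>D. \<Pi>\<^sub>E a\<in>A. {v \<in> V. p v = D a}"
  have projection: "(\<lambda>a\<in>A. p (C a)) = D" if "C \<in> ?lifts D" and "D \<in> F" for C D
  proof
    fix a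
    show "(\<lambda>a\<in>A. p (C a)) a = D a"
      using that assms(4) by (cases "a \<in> A") (auto simp: PiE_def extensional_def)
  qed
  have "{C \<in> A \<rightarrow>\<^sub>E V. (\<lambda>a\<in>A. p (C a)) \<in> F} = (\<Union>D\<in>F. ?lifts D)"
  proof (intro equalityI subsetI)
    fix C assume "C \<in> {C \<in> A \<rightarrow>\<^sub>E V. (\<lambda>a\<in>A. p (C a)) \<in> F}"
    then show "C \<in> (\<Union>D\<in>F. ?lifts D)"
      by (intro UN_I[of "\<lambda>a\<in>A. p (C a)"]) (auto simp: PiE_def)
  next
    fix C assume "C \<in> (\<Union>D\<in>F. ?lifts D)"
    then obtain D where "D \<in> F" "C \<in> ?lifts D" by blast
    with projection show "C \<in> {C \<in> A \<rightarrow>\<^sub>E V. (\<lambda>a\<in>A. p (C a)) \<in> F}"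
      by (auto simp: PiE_def)
  qed
  also have "card \<dots> = (\<Sum>D\<in>F. card (?lifts D))"
  proof (rule card_UN_disjoint)
    show "finite F"
      using assms(1,3) by (intro finite_subset[OF assms(4)] finite_PiE) auto
    show "\<forall>D\<in>F. finite (?lifts D)"
      using assms(1,2) by (auto intro!: finite_PiE)
    show "\<forall>D\<in>F. \<forall>D'\<in>F. D \<noteq> D' \<longrightarrow> ?lifts D \<inter> ?lifts D' = {}"
    proof (intro ballI impI)
      fix D D' assume "D \<in> F" "D' \<in> F" "D \<noteq> D'"
      then show "?lifts D \<inter> ?lifts D' = {}"
        using projection[of _ D] projection[of _ D'] by blast
    qed
  qed
  also have "\<dots> = (\<Sum>D\<in>F. d ^ card A)"
  proof (intro sum.cong refl)
    fix D assume "D \<in> F"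
    then have "(\<Prod>a\<in>A. card {v \<in> V. p v = D a}) = (\<Prod>a\<in>A. d)"
      using assms(4) fibres by (intro prod.cong refl) (auto simp: PiE_def)
    then show "card (?lifts D) = d ^ card A"
      using assms(1) by (simp add: card_PiE)
  qed
  finally show ?thesis by simp
qed

definition F2_compl :: "nat \<Rightarrow> (nat \<Rightarrow> bool) \<Rightarrow> nat \<Rightarrow> bool" where
  "F2_compl N c = (\<lambda>j. if j \<in> {1..N} then \<not> c j else False)"

definition F2_normalize :: "nat \<Rightarrow> (nat \<Rightarrow> bool) \<Rightarrow> nat \<Rightarrow> bool" where
  "F2_normalize N c = (if c 1 then F2_compl N c else c)"

lemma F2vecs_eq_PiE_dflt: "F2vecs N = PiE_dflt {1..N} False (\<lambda>_. UNIV)"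
  by (auto simp: F2vecs_def PiE_dflt_def)

lemma finite_F2vecs: "finite (F2vecs N)"
  by (auto simp: F2vecs_eq_PiE_dflt)

lemma card_F2vecs: "card (F2vecs N) = 2 ^ N"
  by (simp add: F2vecs_eq_PiE_dflt card_PiE_dflt)

lemma card_F2vecs_first_zero: "card {x \<in> F2vecs N. \<not> x 1} = 2 ^ (N - 1)"
proof -
  have "{2..N} = {1..N} - {1}"
    by auto
  then have "{x \<in> F2vecs N. \<not> x 1} = PiE_dflt {2..N} False (\<lambda>_. UNIV)"
    by (auto simp: F2vecs_def PiE_dflt_def)
  then show ?thesis by (simp add: card_PiE_dflt)
qed

lemma F2_compl_in_F2vecs: "F2_compl N c \<in> F2vecs N"
  by (simp add: F2_compl_def F2vecs_def)

lemma F2_compl_compl: "c \<in> F2vecs N \<Longrightarrow> F2_compl N (F2_compl N c) = c"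
  by (auto simp: F2_compl_def F2vecs_def)

lemma F2_compl_first: "N \<ge> 1 \<Longrightarrow> F2_compl N c 1 \<longleftrightarrow> \<not> c 1"
  by (simp add: F2_compl_def)

lemma F2_compl_iff: "c \<in> F2vecs N \<Longrightarrow> c = F2_compl N c' \<longleftrightarrow> (\<forall>l\<in>{1..N}. c l = (\<not> c' l))"
  by (auto simp: F2_compl_def F2vecs_def fun_eq_iff)

lemma F2_normalize_in:
  "N \<ge> 1 \<Longrightarrow> c \<in> F2vecs N \<Longrightarrow> F2_normalize N c \<in> {x \<in> F2vecs N. \<not> x 1}"
  by (auto simp: F2_normalize_def F2vecs_def F2_compl_def)

lemma F2_normalize_eq_iff:
  assumes "N \<ge> 1" and "c \<in> F2vecs N" and "c' \<in> F2vecs N"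
  shows "F2_normalize N c = F2_normalize N c' \<longleftrightarrow> c = c' \<or> c = F2_compl N c'"
proof -
  have first: "F2_compl N x 1 \<longleftrightarrow> \<not> x 1" for x
    using assms(1) by (rule F2_compl_first)
  have "F2_compl N c = c' \<longleftrightarrow> c = F2_compl N c'"
    and "F2_compl N c = F2_compl N c' \<longleftrightarrow> c = c'"
    using F2_compl_compl[OF assms(2)] F2_compl_compl[OF assms(3)] by metis+
  then show ?thesis
    unfolding F2_normalize_def using first[of c] first[of c'] by auto
qed

lemma card_F2_normalize_fibre:
  assumes "N \<ge> 1" and "x \<in> F2vecs N" and "\<not> x 1"
  shows "card {c \<in> F2vecs N. F2_normalize N c = x} = 2"
proof -
  have "F2_normalize N x = x"
    using assms(3) by (simp add: F2_normalize_def)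
  then have "{c \<in> F2vecs N. F2_normalize N c = x} = {x, F2_compl N x}"
    using F2_normalize_eq_iff[OF assms(1) _ assms(2)] assms(2) F2_compl_in_F2vecs by auto
  moreover have "x \<noteq> F2_compl N x"
    using assms(3) F2_compl_first[OF assms(1)] by metis
  ultimately show ?thesis by simp
qed

lemma col_in_F2vecs: "col N B k \<in> F2vecs N"
  by (simp add: col_def F2vecs_def)

lemma card_quotient_kernel:
  "card (A // {(x, y). x \<in> A \<and> y \<in> A \<and> f x = f y}) = card (f ` A)"
proof -
  let ?R = "{(x, y). x \<in> A \<and> y \<in> A \<and> f x = f y}"
  let ?fibre = "\<lambda>z. {x \<in> A. f x = z}"
  have "?R `` {x} = ?fibre (f x)" if "x \<in> A" for x
    using that by auto
  then have "A // ?R = ?fibre ` f ` A"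
    unfolding quotient_def by auto
  moreover have "inj_on ?fibre (f ` A)"
    by (auto simp: inj_on_def)
  ultimately show ?thesis
    by (simp add: card_image)
qed

lemma num_classes_eq_card_image:
  assumes "N \<ge> 1"
  shows "num_classes N n B = card ((\<lambda>k. F2_normalize N (col N B k)) ` {1..n})"
proof -
  have rel: "simB_rel N n B = {(k, j). k \<in> {1..n} \<and> j \<in> {1..n}
      \<and> F2_normalize N (col N B k) = F2_normalize N (col N B j)}"
    using assms
    by (simp add: simB_rel_def simB_def col_in_F2vecs F2_normalize_eq_iff F2_compl_iff)
  show ?thesis
    unfolding num_classes_def rel by (rule card_quotient_kernel)
qed

lemma bij_betw_columns:
  "bij_betw (\<lambda>B. \<lambda>k\<in>{1..n}. col N B k)
     (PiE_dflt {1..N} (\<lambda>_. False) (\<lambda>_. F2vecs n)) ({1..n} \<rightarrow>\<^sub>E F2vecs N)"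
  by (rule bij_betw_byWitness[where
        f' = "\<lambda>C j. if j \<in> {1..N} then (\<lambda>k. if k \<in> {1..n} then C k j else False) else (\<lambda>_. False)"])
    (auto simp: PiE_dflt_def F2vecs_def col_def fun_eq_iff PiE_iff extensional_def)

lemma card_num_classes_eq:
  assumes "N \<ge> 1"
  shows "card {B \<in> PiE_dflt {1..N} (\<lambda>_. False) (\<lambda>_. F2vecs n). num_classes N n B = i}
    = 2 ^ n * Stirling n i * (\<Prod>j<i. 2 ^ (N - 1) - j)"
proof -
  let ?S = "PiE_dflt {1..N} (\<lambda>_. False) (\<lambda>_. F2vecs n)"
  let ?X = "{x \<in> F2vecs N. \<not> x 1}"
  let ?cols = "\<lambda>B. \<lambda>k\<in>{1..n}. col N B k"
  let ?classes = "\<lambda>C. card ((\<lambda>k. F2_normalize N (C k)) ` {1..n})"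
  have "bij_betw ?cols {B \<in> ?S. num_classes N n B = i} {C \<in> {1..n} \<rightarrow>\<^sub>E F2vecs N. ?classes C = i}"
    by (rule bij_betw_Collect[OF bij_betw_columns]) (simp add: num_classes_eq_card_image[OF assms])
  then have "card {B \<in> ?S. num_classes N n B = i}
      = card {C \<in> {1..n} \<rightarrow>\<^sub>E F2vecs N. ?classes C = i}"
    by (rule bij_betw_same_card)
  also have "{C \<in> {1..n} \<rightarrow>\<^sub>E F2vecs N. ?classes C = i}
      = {C \<in> {1..n} \<rightarrow>\<^sub>E F2vecs N. (\<lambda>k\<in>{1..n}. F2_normalize N (C k))
           \<in> {D \<in> {1..n} \<rightarrow>\<^sub>E ?X. card (D ` {1..n}) = i}}"
    using F2_normalize_in[OF assms] by (auto simp: PiE_iff)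
  also have "card \<dots> = 2 ^ card {1..n} * card {D \<in> {1..n} \<rightarrow>\<^sub>E ?X. card (D ` {1..n}) = i}"
    by (rule card_PiE_lift_uniform_fibres[where X = ?X])
      (auto simp: finite_F2vecs card_F2_normalize_fibre[OF assms])
  also have "card {D \<in> {1..n} \<rightarrow>\<^sub>E ?X. card (D ` {1..n}) = i} = Stirling n i * (\<Prod>j<i. 2 ^ (N - 1) - j)"
    using card_PiE_card_image_eq[of "{1..n}" ?X i] finite_F2vecs[of N]
    unfolding card_F2vecs_first_zero by simp
  finally show ?thesis by simp
qed

(* The truncated subtraction in M - j is harmless: for i > M the factor j = M vanishes. *)
lemma prod_one_minus_div_eq:
  assumes "M > 0"
  shows "(\<Prod>j=1..i. 1 - (real j - 1) / real M) = real (\<Prod>j<i. M - j) / real M ^ i"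
proof (induction i)
  case 0
  then show ?case by simp
next
  case (Suc i)
  have "(\<Prod>j=1..Suc i. 1 - (real j - 1) / real M)
      = (\<Prod>j=1..i. 1 - (real j - 1) / real M) * (1 - real i / real M)"
    by (simp add: prod.cl_ivl_Suc)
  also have "\<dots> = real (\<Prod>j<i. M - j) / real M ^ i * (1 - real i / real M)"
    by (simp only: Suc.IH)
  also have "\<dots> = real (\<Prod>j<Suc i. M - j) / real M ^ Suc i"
  proof (cases "i \<le> M")
    case True
    then show ?thesis
      using assms by (simp add: of_nat_diff field_simps)
  next
    case False
    then have vanishes: "(\<Prod>j<i. M - j) = 0"
      by (intro prod_zero) auto
    show ?thesis
      unfolding prod.lessThan_Suc vanishes by simp
  qed
  finally show ?case .
qed

lemma prob_num_classes_eq: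
  assumes "N \<ge> 1" and "i \<le> n"
  shows "measure_pmf.prob (rand_family N n) {B. num_classes N n B = i}
    = real (Stirling n i) / 2 ^ ((N - 1) * (n - i)) * (\<Prod>j=1..i. 1 - (real j - 1) / 2 ^ (N - 1))"
proof -
  let ?S = "PiE_dflt {1..N} (\<lambda>_. False) (\<lambda>_. F2vecs n)"
  define M :: nat where "M = 2 ^ (N - 1)"
  have M_real: "real M = 2 ^ (N - 1)"
    by (simp add: M_def)
  have M_pos: "M > 0"
    by (simp add: M_def)
  have "F2vecs n \<noteq> {}"
    unfolding F2vecs_def by blast
  then have "rand_family N n = pmf_of_set ?S"
    unfolding rand_family_def by (intro Pi_pmf_of_set) (auto simp: finite_F2vecs)
  moreover have "?S \<noteq> {}"
    using \<open>F2vecs n \<noteq> {}\<close> by simp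
  moreover have "finite ?S"
    by (auto simp: finite_F2vecs)
  ultimately have "measure_pmf.prob (rand_family N n) {B. num_classes N n B = i}
      = real (card (?S \<inter> {B. num_classes N n B = i})) / real (card ?S)"
    by (simp add: measure_pmf_of_set)
  also have "?S \<inter> {B. num_classes N n B = i} = {B \<in> ?S. num_classes N n B = i}"
    by blast
  also have "real (card {B \<in> ?S. num_classes N n B = i}) / real (card ?S)
      = real (2 ^ n * Stirling n i * (\<Prod>j<i. M - j)) / 2 ^ (n * N)"
    unfolding card_num_classes_eq[OF assms(1)] M_def
    by (simp add: card_PiE_dflt finite_F2vecs card_F2vecs power_mult)
  also have "(2::real) ^ (n * N) = 2 ^ n * real M ^ (n - i) * real M ^ i"
  proof -
    have "n * N = n + (N - 1) * ((n - i) + i)"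
      using assms by (simp add: algebra_simps)
    then show ?thesis
      by (simp add: M_real power_add power_mult)
  qed
  also have "real (2 ^ n * Stirling n i * (\<Prod>j<i. M - j)) / (2 ^ n * real M ^ (n - i) * real M ^ i)
      = real (Stirling n i) / real M ^ (n - i) * (real (\<Prod>j<i. M - j) / real M ^ i)"
    by (simp add: field_simps M_real)
  also have "\<dots> = real (Stirling n i) / 2 ^ ((N - 1) * (n - i)) * (\<Prod>j=1..i. 1 - (real j - 1) / 2 ^ (N - 1))"
    unfolding M_real[symmetric] prod_one_minus_div_eq[of M, OF M_pos] by (simp add: M_real power_mult)
  finally show ?thesis .
qed

theorem corollary8p6:
  fixes N n i :: nat
  assumes "N \<ge> 1" and "1 \<le> i" and "i \<le> n"
  shows "real (Stirling n i) / 2 ^ ((N - 1) * (n - i)) * (\<Prod>j=1..i. 1 - (real j - 1) / 2 ^ (N - 1))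
           \<le> measure_pmf.prob (rand_family N n) {B. num_classes N n B = i}
       \<and> measure_pmf.prob (rand_family N n) {B. num_classes N n B = i}
           \<le> real (Stirling n i) * real i ^ (n - i) / 2 ^ ((N - 1) * (n - i))
              * (\<Prod>j=1..i. 1 - (real j - 1) / 2 ^ (N - 1))"
proof -
  let ?p = "measure_pmf.prob (rand_family N n) {B. num_classes N n B = i}"
  have exact: "?p = real (Stirling n i) / 2 ^ ((N - 1) * (n - i))
      * (\<Prod>j=1..i. 1 - (real j - 1) / 2 ^ (N - 1))"
    using assms(1,3) by (rule prob_num_classes_eq)
  have "1 \<le> real i ^ (n - i)"
    using assms(2) by simp
  then have "?p \<le> real i ^ (n - i) * ?p"
    using mult_right_mono[OF _ measure_nonneg] by fastforce
  then show ?thesis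
    by (simp add: exact mult_ac)
qed

end
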